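(* Let $\mathcal{C}$ be a prevariety over a finite alphabet $A$. Then $\mathit{SF}(\mathcal{C}) = \mathrm{FO}(\mathbb{I}_{\mathcal{C}})$.
   Context: Fix a finite alphabet $A$. A prevariety is a class of regular languages over $A$ containing $\emptyset$ and $A^*$, closed under union, intersection, complement, and under the quotients $u^{-1}L=\{w\mid uw\in L\}$ and $Lu^{-1}=\{w\mid wu\in L\}$. $\mathit{SF}(\mathcal{C})$ is the least class containing $\mathcal{C}$ and all $\{a\}$ ($a\in A$), closed under union, complement and concatenation. A word $w=a_1\cdots a_n$ is viewed as a structure with domain $\{0,1,\dots,n+1\}$; positions $1\le i\le n$ carry label $a_i$, while $0$ and $n+1$ are unlabeled. For positions $i<j$, $w(i,j)=a_{i+1}\cdots a_{j-1}$. First-order formulas over a set $\mathbb{S}$ of predicates use first-order variables ranging over positions, two constants $\mathit{min}$ and $\mathit{max}$ interpreted as $0$ and $n+1$, atomic formulas $x=y$ and $P(x_1,\dots,x_k)$ for $P\in\mathbb{S}$ (arguments being variables or constants), and are closed under disjunction, negation and existential quantification, with the usual semantics. The label predicates are unary predicates $a(x)$ for $a\in A$, holding iff position $x$ is labeled $a$ (so never at $0$ or $n+1$). For a set $\mathbb{S}$ of predicates, $\mathrm{FO}(\mathbb{S})$ is the class of languages $\{w\mid w\models\varphi\}$ defined by first-order sentences $\varphi$ over the label predicates together with $\mathbb{S}$. $\mathbb{I}_{\mathcal{C}}$ is the set containing, for each $L\in\mathcal{C}$, a binary predicate $I_L$ with $I_L(i,j)$ holding in $w$ iff $i<j$ and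 $w(i,j)\in L$. *)

theory Defs
  imports Main
begin

definition regular :: "'a list set \<Rightarrow> bool" where
  "regular L \<longleftrightarrow>
     (\<exists>(Q::nat set) q0 \<delta> F. finite Q \<and> q0 \<in> Q \<and> (\<forall>q\<in>Q. \<forall>a. \<delta> q a \<in> Q) \<and>
        L = {w. fold (\<lambda>a q. \<delta> q a) w q0 \<in> F})"

definition lquot :: "'a list \<Rightarrow> 'a list set \<Rightarrow> 'a list set" where
  "lquot u L = {w. u @ w \<in> L}"

definition rquot :: "'a list set \<Rightarrow> 'a list \<Rightarrow> 'a list set" where
  "rquot L u = {w. w @ u \<in> L}"

definition prevariety :: "'a list set set \<Rightarrow> bool" where
  "prevariety C \<longleftrightarrow>
     (\<forall>L\<in>C. regular L) \<and> {} \<in> C \<and> UNIV \<in> C \<and>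
     (\<forall>K\<in>C. \<forall>L\<in>C. K \<union> L \<in> C) \<and>
     (\<forall>K\<in>C. \<forall>L\<in>C. K \<inter> L \<in> C) \<and>
     (\<forall>L\<in>C. - L \<in> C) \<and>
     (\<forall>L\<in>C. \<forall>u. lquot u L \<in> C) \<and>
     (\<forall>L\<in>C. \<forall>u. rquot L u \<in> C)"

definition conc :: "'a list set \<Rightarrow> 'a list set \<Rightarrow> 'a list set" where
  "conc K L = {u @ v | u v. u \<in> K \<and> v \<in> L}"

inductive_set SF :: "'a list set set \<Rightarrow> 'a list set set" for C where
  base: "L \<in> C \<Longrightarrow> L \<in> SF C"
| letter: "{[a]} \<in> SF C"
| union: "K \<in> SF C \<Longrightarrow> L \<in> SF C \<Longrightarrow> K \<union> L \<in> SF C"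
| compl: "L \<in> SF C \<Longrightarrow> - L \<in> SF C"
| concat: "K \<in> SF C \<Longrightarrow> L \<in> SF C \<Longrightarrow> conc K L \<in> SF C"

datatype fo_term = FVar nat | FMin | FMax

datatype 'a fo =
    FEq fo_term fo_term
  | FLabel 'a fo_term
  | FInf "'a list set" fo_term fo_term
  | FOr "'a fo" "'a fo"
  | FNeg "'a fo"
  | FEx nat "'a fo"

fun tvars :: "fo_term \<Rightarrow> nat set" where
  "tvars (FVar x) = {x}"
| "tvars FMin = {}"
| "tvars FMax = {}"

fun free_vars :: "'a fo \<Rightarrow> nat set" where
  "free_vars (FEq s t) = tvars s \<union> tvars t"
| "free_vars (FLabel a t) = tvars t"
| "free_vars (FInf L s t) = tvars s \<union> tvars t"
| "free_vars (FOr \<phi> \<psi>) = free_vars \<phi> \<union> free_vars \<psi>"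
| "free_vars (FNeg \<phi>) = free_vars \<phi>"
| "free_vars (FEx x \<phi>) = free_vars \<phi> - {x}"

fun preds :: "'a fo \<Rightarrow> 'a list set set" where
  "preds (FEq s t) = {}"
| "preds (FLabel a t) = {}"
| "preds (FInf L s t) = {L}"
| "preds (FOr \<phi> \<psi>) = preds \<phi> \<union> preds \<psi>"
| "preds (FNeg \<phi>) = preds \<phi>"
| "preds (FEx x \<phi>) = preds \<phi>"

text \<open>Positions of w are 0..length w + 1; min = 0, max = length w + 1.\<close>
fun tval :: "'a list \<Rightarrow> (nat \<Rightarrow> nat) \<Rightarrow> fo_term \<Rightarrow> nat" where
  "tval w \<sigma> (FVar x) = \<sigma> x"
| "tval w \<sigma> FMin = 0"
| "tval w \<sigma> FMax = length w + 1"

text \<open>The infix w(i,j) = a_(i+1) ... a_(j-1) for i < j.\<close>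
definition infix_between :: "'a list \<Rightarrow> nat \<Rightarrow> nat \<Rightarrow> 'a list" where
  "infix_between w i j = take (j - i - 1) (drop i w)"

fun sat :: "'a list \<Rightarrow> (nat \<Rightarrow> nat) \<Rightarrow> 'a fo \<Rightarrow> bool" where
  "sat w \<sigma> (FEq s t) \<longleftrightarrow> tval w \<sigma> s = tval w \<sigma> t"
| "sat w \<sigma> (FLabel a t) \<longleftrightarrow>
     (let i = tval w \<sigma> t in 1 \<le> i \<and> i \<le> length w \<and> w ! (i - 1) = a)"
| "sat w \<sigma> (FInf L s t) \<longleftrightarrow>
     (let i = tval w \<sigma> s; j = tval w \<sigma> t in i < j \<and> infix_between w i j \<in> L)"
| "sat w \<sigma> (FOr \<phi> \<psi>) \<longleftrightarrow> sat w \<sigma> \<phi> \<or> sat w \<sigma> \<psi>"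
| "sat w \<sigma> (FNeg \<phi>) \<longleftrightarrow> \<not> sat w \<sigma> \<phi>"
| "sat w \<sigma> (FEx x \<phi>) \<longleftrightarrow> (\<exists>i \<le> length w + 1. sat w (\<sigma>(x := i)) \<phi>)"

text \<open>FO(I_C): languages defined by sentences using label predicates and predicates I_L with L in C.
  For a sentence the assignment is irrelevant; we use the constant assignment 0.\<close>
definition FO_I :: "'a list set set \<Rightarrow> 'a list set set" where
  "FO_I C = {{w. sat w (\<lambda>_. 0) \<phi>} | \<phi>. free_vars \<phi> = {} \<and> preds \<phi> \<subseteq> C}"

end

theory Submission
  imports Defs
begin

text \<open>
  \<^emph>\<open>SF(C) \<subseteq> FO(I_C)\<close>, by induction on SF(C): L \<in> C is defined by I_L(min, max), a letter a by
  \<open>there is exactly one labelled position and it carries a\<close>, and a concatenation K L by two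
  consecutive positions x < y such that the sentence for K holds strictly between min and y and the
  one for L strictly between x and max (relativization). The order x < y is I_{A*}(x, y).

  \<^emph>\<open>FO(I_C) \<subseteq> SF(C)\<close>: a word with marked letters b_1, ..., b_n is u_0 b_1 u_1 ... b_n u_n. For a
  formula whose free variables denote marked positions, the set of block tuples (u_0, ..., u_n)
  satisfying it is a finite union of products of languages of SF(C). Boolean connectives preserve
  this shape. An existential quantifier either picks a marker, or a letter c inside some block
  u_k = v c w, which becomes a new marker; the blocks v and w are merged back by the concatenation
  (v \<in> P) c (w \<in> Q). An atom I_L between two markers constrains a consecutive stretch of blocks and
  markers; it has the required shape because a language of SF(C) has finitely many quotients, all in
  SF(C) (this is where the prevariety hypothesis is used), so that membership of a concatenation v z
  in it amounts to one of finitely many conditions v \<in> P and z \<in> K. For a sentence (n = 0) the set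
  of 1-tuples is a finite union of languages of SF(C).
\<close>

section \<open>Quotients\<close>

abbreviation lquots :: "'a list set \<Rightarrow> 'a list set set" where
  "lquots L \<equiv> range (\<lambda>u. lquot u L)"

abbreviation rquots :: "'a list set \<Rightarrow> 'a list set set" where
  "rquots L \<equiv> range (rquot L)"

lemma fold_transitions_closed:
  "q \<in> Q \<Longrightarrow> \<forall>q\<in>Q. \<forall>a. \<delta> q a \<in> Q \<Longrightarrow> fold (\<lambda>a q. \<delta> q a) w q \<in> Q"
  by (induction w arbitrary: q) auto

lemma finite_lquots_regular:
  assumes "regular L"
  shows "finite (lquots L)"
proof -
  obtain Q :: "nat set" and q0 \<delta> F where Q: "finite Q" "q0 \<in> Q" "\<forall>q\<in>Q. \<forall>a. \<delta> q a \<in> Q"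
    and L: "L = {w. fold (\<lambda>a q. \<delta> q a) w q0 \<in> F}"
    using assms unfolding regular_def by blast
  have "lquot u L = {w. fold (\<lambda>a q. \<delta> q a) w (fold (\<lambda>a q. \<delta> q a) u q0) \<in> F}" for u
    by (simp add: lquot_def L)
  then have "lquots L \<subseteq> (\<lambda>q. {w. fold (\<lambda>a q. \<delta> q a) w q \<in> F}) ` Q"
    using fold_transitions_closed[OF Q(2,3)] by blast
  then show ?thesis
    by (rule finite_surj[OF Q(1)])
qed

lemma finite_rquots_regular:
  assumes "regular L"
  shows "finite (rquots L)"
proof -
  obtain Q :: "nat set" and q0 \<delta> F where Q: "finite Q" "q0 \<in> Q" "\<forall>q\<in>Q. \<forall>a. \<delta> q a \<in> Q"
    and L: "L = {w. fold (\<lambda>a q. \<delta> q a) w q0 \<in> F}"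
    using assms unfolding regular_def by blast
  have "rquot L u = {w. fold (\<lambda>a q. \<delta> q a) w q0 \<in> {q \<in> Q. fold (\<lambda>a q. \<delta> q a) u q \<in> F}}" for u
    using fold_transitions_closed[OF Q(2,3)] by (auto simp: rquot_def L)
  then have "rquots L \<subseteq> (\<lambda>S. {w. fold (\<lambda>a q. \<delta> q a) w q0 \<in> S}) ` Pow Q"
    by blast
  then show ?thesis
    by (rule finite_surj[OF finite_Pow_iff[THEN iffD2, OF Q(1)]])
qed

lemma lquot_Un: "lquot u (K \<union> L) = lquot u K \<union> lquot u L"
  by (auto simp: lquot_def)

lemma rquot_Un: "rquot (K \<union> L) u = rquot K u \<union> rquot L u"
  by (auto simp: rquot_def)

lemma lquot_Compl: "lquot u (- L) = - lquot u L"
  by (auto simp: lquot_def)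

lemma rquot_Compl: "rquot (- L) u = - rquot L u"
  by (auto simp: rquot_def)

lemma lquot_singleton: "lquot u {[a]} = (if u = [] then {[a]} else if u = [a] then {[]} else {})"
  by (auto simp: lquot_def append_eq_Cons_conv)

lemma rquot_singleton: "rquot {[a]} u = (if u = [] then {[a]} else if u = [a] then {[]} else {})"
  by (auto simp: rquot_def append_eq_Cons_conv)

lemma concI: "x \<in> K \<Longrightarrow> y \<in> L \<Longrightarrow> w = x @ y \<Longrightarrow> w \<in> conc K L"
  by (auto simp: conc_def)

lemma concE: "w \<in> conc K L \<Longrightarrow> (\<And>x y. x \<in> K \<Longrightarrow> y \<in> L \<Longrightarrow> w = x @ y \<Longrightarrow> P) \<Longrightarrow> P"
  by (auto simp: conc_def)

lemma conc_iff_take_drop: "w \<in> conc K L \<longleftrightarrow> (\<exists>i \<le> length w. take i w \<in> K \<and> drop i w \<in> L)"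
proof
  assume "w \<in> conc K L"
  then obtain x y where "x \<in> K" "y \<in> L" "w = x @ y"
    by (rule concE)
  then show "\<exists>i \<le> length w. take i w \<in> K \<and> drop i w \<in> L"
    by (intro exI[of _ "length x"]) auto
next
  assume "\<exists>i \<le> length w. take i w \<in> K \<and> drop i w \<in> L"
  then obtain i where "take i w \<in> K" "drop i w \<in> L"
    by blast
  then show "w \<in> conc K L"
    by (simp add: concI[of "take i w" K "drop i w"])
qed

lemma lquot_conc:
  "lquot u (conc K L) =
     conc (lquot u K) L \<union> (\<Union>i\<in>{i. i \<le> length u \<and> take i u \<in> K}. lquot (drop i u) L)"
proof (intro set_eqI iffI)
  fix w assume "w \<in> lquot u (conc K L)"
  then obtain x y where xy: "u @ w = x @ y" "x \<in> K" "y \<in> L"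
    by (auto simp: lquot_def conc_def)
  then obtain us where "u = x @ us \<and> us @ w = y \<or> u @ us = x \<and> w = us @ y"
    by (auto simp: append_eq_append_conv2)
  then show "w \<in> conc (lquot u K) L \<union> (\<Union>i\<in>{i. i \<le> length u \<and> take i u \<in> K}. lquot (drop i u) L)"
  proof
    assume "u = x @ us \<and> us @ w = y"
    then have "take (length x) u = x" "drop (length x) u @ w = y" "length x \<le> length u"
      by auto
    then show ?thesis
      using xy by (auto simp: lquot_def)
  next
    assume "u @ us = x \<and> w = us @ y"
    then show ?thesis
      using xy by (auto simp: lquot_def intro!: concI[of us _ y])
  qed
next
  fix w assume "w \<in> conc (lquot u K) L \<union> (\<Union>i\<in>{i. i \<le> length u \<and> take i u \<in> K}. lquot (drop i u) L)"
  then show "w \<in> lquot u (conc K L)"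
  proof
    assume "w \<in> conc (lquot u K) L"
    then obtain x y where "u @ x \<in> K" "y \<in> L" "w = x @ y"
      by (auto simp: lquot_def elim: concE)
    then show ?thesis
      by (simp add: lquot_def concI[of "u @ x" K y])
  next
    assume "w \<in> (\<Union>i\<in>{i. i \<le> length u \<and> take i u \<in> K}. lquot (drop i u) L)"
    then obtain i where "take i u \<in> K" "drop i u @ w \<in> L"
      by (auto simp: lquot_def)
    then show ?thesis
      by (simp add: lquot_def concI[of "take i u" K "drop i u @ w"])
  qed
qed

lemma rquot_conc:
  "rquot (conc K L) u =
     conc K (rquot L u) \<union> (\<Union>i\<in>{i. i \<le> length u \<and> drop i u \<in> L}. rquot K (take i u))"
proof (intro set_eqI iffI)
  fix w assume "w \<in> rquot (conc K L) u"
  then obtain x y where xy: "w @ u = x @ y" "x \<in> K" "y \<in> L"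
    by (auto simp: rquot_def conc_def)
  then obtain us where "w = x @ us \<and> us @ u = y \<or> w @ us = x \<and> u = us @ y"
    by (auto simp: append_eq_append_conv2)
  then show "w \<in> conc K (rquot L u) \<union> (\<Union>i\<in>{i. i \<le> length u \<and> drop i u \<in> L}. rquot K (take i u))"
  proof
    assume "w @ us = x \<and> u = us @ y"
    then have "take (length us) u = us" "drop (length us) u = y" "length us \<le> length u"
      by auto
    then have "length us \<in> {i. i \<le> length u \<and> drop i u \<in> L}" "w \<in> rquot K (take (length us) u)"
      using xy \<open>w @ us = x \<and> u = us @ y\<close> by (auto simp: rquot_def)
    then show ?thesis
      by blast
  next
    assume "w = x @ us \<and> us @ u = y"
    then show ?thesis
      using xy by (auto simp: rquot_def intro!: concI[of x _ us])
  qed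
next
  fix w assume "w \<in> conc K (rquot L u) \<union> (\<Union>i\<in>{i. i \<le> length u \<and> drop i u \<in> L}. rquot K (take i u))"
  then show "w \<in> rquot (conc K L) u"
  proof
    assume "w \<in> conc K (rquot L u)"
    then obtain x y where "x \<in> K" "y @ u \<in> L" "w = x @ y"
      by (auto simp: rquot_def elim: concE)
    then show ?thesis
      by (simp add: rquot_def concI[of x K "y @ u"])
  next
    assume "w \<in> (\<Union>i\<in>{i. i \<le> length u \<and> drop i u \<in> L}. rquot K (take i u))"
    then obtain i where "drop i u \<in> L" "w @ take i u \<in> K"
      by (auto simp: rquot_def)
    then show ?thesis
      by (simp add: rquot_def concI[of "w @ take i u" K "drop i u"])
  qed
qed

lemma finite_range_combine:
  assumes "finite (range f)" "finite (range g)"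
  shows "finite (range (\<lambda>x. h (f x) (g x)))"
proof -
  have "range (\<lambda>x. h (f x) (g x)) \<subseteq> case_prod h ` (range f \<times> range g)"
    by auto
  then show ?thesis
    using assms finite_subset by blast
qed

lemma SF_UNIV: "UNIV \<in> SF C"
proof -
  have "{[undefined]} \<union> - {[undefined]} \<in> SF C"
    by (intro SF.union SF.compl SF.letter)
  then show ?thesis
    by simp
qed

lemma SF_empty: "{} \<in> SF C"
  using SF.compl[OF SF_UNIV] by simp

lemma SF_Int:
  assumes "K \<in> SF C" "L \<in> SF C"
  shows "K \<inter> L \<in> SF C"
proof -
  have "- (- K \<union> - L) \<in> SF C"
    using assms by (intro SF.compl SF.union)
  then show ?thesis
    by simp
qed

lemma SF_Union: "finite S \<Longrightarrow> S \<subseteq> SF C \<Longrightarrow> \<Union>S \<in> SF C"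
  by (induction S rule: finite_induct) (auto intro: SF_empty SF.union)

lemma SF_Inter: "finite S \<Longrightarrow> S \<subseteq> SF C \<Longrightarrow> \<Inter>S \<in> SF C"
  by (induction S rule: finite_induct) (auto intro: SF_UNIV SF_Int)

lemma SF_Nil: "{[]} \<in> SF (C :: ('a::finite) list set set)"
proof -
  have "(\<Union>a. conc {[a]} UNIV) \<in> SF C"
    by (rule SF_Union) (auto intro: SF.concat SF.letter SF_UNIV)
  moreover have "- (\<Union>a. conc {[a]} (UNIV :: 'a list set)) = {[]}"
    by (auto simp: conc_def) (meson neq_Nil_conv)
  ultimately show ?thesis
    using SF.compl by metis
qed

lemma finite_prefix_indices: "finite {i. i \<le> length u \<and> P i}"
  by (rule finite_subset[of _ "{..length u}"]) auto

lemma lquot_SF: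
  assumes "prevariety C" "L \<in> SF (C :: ('a::finite) list set set)"
  shows "lquot u L \<in> SF C"
  using assms(2)
proof (induction arbitrary: u)
  case (base L)
  then show ?case
    using assms(1) by (auto simp: prevariety_def intro: SF.base)
next
  case (letter a)
  then show ?case
    by (auto simp: lquot_singleton intro: SF.letter SF_Nil SF_empty)
next
  case (union K L)
  then show ?case
    by (auto simp: lquot_Un intro: SF.union)
next
  case (compl L)
  then show ?case
    by (auto simp: lquot_Compl intro: SF.compl)
next
  case (concat K L)
  then show ?case
    unfolding lquot_conc by (intro SF.union SF.concat SF_Union) (auto intro: finite_prefix_indices)
qed

lemma rquot_SF:
  assumes "prevariety C" "L \<in> SF (C :: ('a::finite) list set set)"
  shows "rquot L u \<in> SF C"
  using assms(2)
proof (induction arbitrary: u)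
  case (base L)
  then show ?case
    using assms(1) by (auto simp: prevariety_def intro: SF.base)
next
  case (letter a)
  then show ?case
    by (auto simp: rquot_singleton intro: SF.letter SF_Nil SF_empty)
next
  case (union K L)
  then show ?case
    by (auto simp: rquot_Un intro: SF.union)
next
  case (compl L)
  then show ?case
    by (auto simp: rquot_Compl intro: SF.compl)
next
  case (concat K L)
  then show ?case
    unfolding rquot_conc by (intro SF.union SF.concat SF_Union) (auto intro: finite_prefix_indices)
qed

lemma finite_lquots_SF:
  assumes "prevariety C" "L \<in> SF C"
  shows "finite (lquots L)"
  using assms(2)
proof induction
  case (base L)
  then show ?case
    using assms(1) by (auto simp: prevariety_def intro: finite_lquots_regular)
next
  case (letter a)
  have "lquots {[a]} \<subseteq> {{[a]}, {[]}, {}}"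
    by (auto simp: lquot_singleton)
  then show ?case
    by (rule finite_subset) simp
next
  case (union K L)
  then show ?case
    using finite_range_combine[OF union.IH, of "(\<union>)"] by (simp add: lquot_Un)
next
  case (compl L)
  then show ?case
    using finite_imageI[OF compl.IH, of uminus] by (simp add: lquot_Compl image_image)
next
  case (concat K L)
  define tails where "tails u = (\<lambda>i. lquot (drop i u) L) ` {i. i \<le> length u \<and> take i u \<in> K}" for u
  have "range tails \<subseteq> Pow (lquots L)"
    by (auto simp: tails_def)
  then have "finite (range tails)"
    using concat.IH(2) finite_subset by blast
  then have "finite (range (\<lambda>u. conc (lquot u K) L \<union> \<Union>(tails u)))"
    by (rule finite_range_combine[OF concat.IH(1), where h = "\<lambda>X S. conc X L \<union> \<Union>S"])
  then show ?case
    by (simp only: lquot_conc tails_def)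
qed

lemma finite_rquots_SF:
  assumes "prevariety C" "L \<in> SF C"
  shows "finite (rquots L)"
  using assms(2)
proof induction
  case (base L)
  then show ?case
    using assms(1) by (auto simp: prevariety_def intro: finite_rquots_regular)
next
  case (letter a)
  have "rquots {[a]} \<subseteq> {{[a]}, {[]}, {}}"
    by (auto simp: rquot_singleton)
  then show ?case
    by (rule finite_subset) simp
next
  case (union K L)
  then show ?case
    using finite_range_combine[OF union.IH, of "(\<union>)"] by (simp add: rquot_Un)
next
  case (compl L)
  then show ?case
    using finite_imageI[OF compl.IH, of uminus] by (simp add: rquot_Compl image_image)
next
  case (concat K L)
  define heads where "heads u = (\<lambda>i. rquot K (take i u)) ` {i. i \<le> length u \<and> drop i u \<in> L}" for u
  have "range heads \<subseteq> Pow (rquots K)"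
    by (auto simp: heads_def)
  then have "finite (range heads)"
    using concat.IH(1) finite_subset by blast
  then have "finite (range (\<lambda>u. conc K (rquot L u) \<union> \<Union>(heads u)))"
    by (rule finite_range_combine[OF concat.IH(2), where h = "\<lambda>X S. conc K X \<union> \<Union>S"])
  then show ?case
    by (simp only: rquot_conc heads_def)
qed

text \<open>
  The pairs are (P_K, K) for the left quotients K of L, where P_K = {v. lquot v L = K} is a finite
  Boolean combination of right quotients of L.
\<close>

lemma SF_product_decomposition:
  assumes "prevariety C" "L \<in> SF (C :: ('a::finite) list set set)"
  obtains PS where "finite PS" "PS \<subseteq> SF C \<times> SF C"
    "\<And>v z. v @ z \<in> L \<longleftrightarrow> (\<exists>(P, K) \<in> PS. v \<in> P \<and> z \<in> K)"
proof
  define prefixes where "prefixes K = {v. lquot v L = K}" for K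
  define PS where "PS = (\<lambda>K. (prefixes K, K)) ` lquots L"
  show "finite PS"
    unfolding PS_def using finite_lquots_SF[OF assms] by simp
  have "prefixes K \<in> SF C" for K
  proof -
    define Z where "Z = (\<lambda>z. if z \<in> K then rquot L z else - rquot L z) ` UNIV"
    have "Z \<subseteq> rquots L \<union> uminus ` rquots L"
      by (auto simp: Z_def)
    then have "finite Z"
      using finite_rquots_SF[OF assms] by (meson finite_UnI finite_imageI finite_subset)
    moreover have "Z \<subseteq> SF C"
      using rquot_SF[OF assms] by (auto simp: Z_def intro: SF.compl)
    moreover have "prefixes K = \<Inter>Z"
      by (auto simp: Z_def prefixes_def lquot_def rquot_def)
    ultimately show ?thesis
      using SF_Inter by metis
  qed
  then show "PS \<subseteq> SF C \<times> SF C"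
    unfolding PS_def using lquot_SF[OF assms] by auto
  show "v @ z \<in> L \<longleftrightarrow> (\<exists>(P, K) \<in> PS. v \<in> P \<and> z \<in> K)" for v z
    by (auto simp: PS_def prefixes_def lquot_def)
qed

section \<open>Words with marked positions\<close>

text \<open>
  interleave [u_0, ..., u_n] [b_1, ..., b_n] = u_0 b_1 u_1 ... b_n u_n, and the marker b_k sits at
  position marker_pos us k; the markers 0 and n + 1 are the positions min and max.
\<close>

fun interleave :: "'a list list \<Rightarrow> 'a list \<Rightarrow> 'a list" where
  "interleave [] bs = []"
| "interleave [u] bs = u"
| "interleave (u # v # us) bs = u @ hd bs # interleave (v # us) (tl bs)"

definition marker_pos :: "'a list list \<Rightarrow> nat \<Rightarrow> nat" where
  "marker_pos us k = sum_list (map (\<lambda>u. Suc (length u)) (take k us))"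

lemma interleave_Cons: "us \<noteq> [] \<Longrightarrow> interleave (u # us) (b # bs) = u @ b # interleave us bs"
  by (cases us) auto

lemma interleave_Cons_append: "interleave ((v @ w) # us) bs = v @ interleave (w # us) bs"
  by (cases us) auto

lemma marker_pos_0 [simp]: "marker_pos us 0 = 0"
  by (simp add: marker_pos_def)

lemma marker_pos_Cons_Suc [simp]: "marker_pos (u # us) (Suc k) = Suc (length u) + marker_pos us k"
  by (simp add: marker_pos_def)

lemma marker_pos_min_length: "marker_pos us (min k (length us)) = marker_pos us k"
  by (simp add: marker_pos_def min_def)

lemma marker_pos_Suc: "k < length us \<Longrightarrow> marker_pos us (Suc k) = marker_pos us k + Suc (length (us ! k))"
  by (simp add: marker_pos_def take_Suc_conv_app_nth)

lemma marker_pos_add: "marker_pos us (i + k) = marker_pos us i + marker_pos (drop i us) k"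
  by (simp add: marker_pos_def take_add)

lemma marker_pos_mono: "i \<le> j \<Longrightarrow> marker_pos us i \<le> marker_pos us j"
  using marker_pos_add[of us i "j - i"] by simp

lemma marker_pos_strict_mono: "i < j \<Longrightarrow> j \<le> length us \<Longrightarrow> marker_pos us i < marker_pos us j"
proof (induction j)
  case (Suc j)
  then show ?case
    using marker_pos_Suc[of j us] by (cases "i = j") auto
qed simp

lemma marker_pos_eq_iff:
  "i \<le> length us \<Longrightarrow> j \<le> length us \<Longrightarrow> marker_pos us i = marker_pos us j \<longleftrightarrow> i = j"
  using marker_pos_strict_mono[of i j us] marker_pos_strict_mono[of j i us]
  by (cases i j rule: linorder_cases) auto

lemma length_interleave:
  "length us = Suc (length bs) \<Longrightarrow> Suc (length (interleave us bs)) = marker_pos us (length us)"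
proof (induction us bs rule: interleave.induct)
  case (3 u v us bs)
  then show ?case
    by (cases bs) auto
qed auto

lemma nth_interleave_marker_pos:
  "length us = Suc (length bs) \<Longrightarrow> 0 < i \<Longrightarrow> i < length us \<Longrightarrow>
    interleave us bs ! (marker_pos us i - 1) = bs ! (i - 1)"
proof (induction us arbitrary: bs i)
  case (Cons u us)
  then obtain b bs' where bs: "bs = b # bs'"
    by (cases bs) auto
  have "us \<noteq> []"
    using Cons.prems by auto
  show ?case
  proof (cases "i = 1")
    case True
    then show ?thesis
      using \<open>us \<noteq> []\<close> by (simp add: bs interleave_Cons)
  next
    case False
    then obtain i' where i: "i = Suc i'" "0 < i'"
      using Cons.prems by (cases i) auto
    then have "marker_pos us i' \<ge> 1"
      using marker_pos_strict_mono[of 0 i' us] Cons.prems by auto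
    then have "marker_pos (u # us) i - 1 = length u + Suc (marker_pos us i' - 1)"
      using i by simp
    then show ?thesis
      using Cons.IH[of bs' i'] Cons.prems i \<open>us \<noteq> []\<close> by (simp add: bs interleave_Cons nth_append)
  qed
qed simp

lemma drop_interleave:
  "length us = Suc (length bs) \<Longrightarrow> i < length us \<Longrightarrow>
    drop (marker_pos us i) (interleave us bs) = interleave (drop i us) (drop i bs)"
proof (induction us arbitrary: bs i)
  case (Cons u us)
  show ?case
  proof (cases i)
    case (Suc i')
    then obtain b bs' where "bs = b # bs'"
      using Cons.prems by (cases bs) auto
    moreover have "us \<noteq> []"
      using Cons.prems Suc by auto
    ultimately show ?thesis
      using Cons.IH[of bs' i'] Cons.prems Suc by (simp add: interleave_Cons)
  qed simp
qed simp

lemma take_interleave: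
  "length us = Suc (length bs) \<Longrightarrow> 0 < k \<Longrightarrow> k \<le> length us \<Longrightarrow>
    take (marker_pos us k - 1) (interleave us bs) = interleave (take k us) (take (k - 1) bs)"
proof (induction us arbitrary: bs k)
  case (Cons u us)
  then obtain k' where k: "k = Suc k'"
    by (cases k) auto
  show ?case
  proof (cases "k' = 0")
    case True
    then show ?thesis
      using k Cons.prems by (cases us; cases bs) (auto simp: interleave_Cons)
  next
    case False
    have "us \<noteq> []"
      using Cons.prems k False by auto
    then obtain b bs' where bs: "bs = b # bs'"
      using Cons.prems by (cases bs) auto
    have "marker_pos us k' \<ge> 1"
      using marker_pos_strict_mono[of 0 k' us] k False Cons.prems by auto
    then have "marker_pos (u # us) k - 1 = length u + Suc (marker_pos us k' - 1)"
      using k by simp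
    moreover have "take k' us \<noteq> []" "k' - 1 + 1 = k'"
      using False \<open>us \<noteq> []\<close> by simp_all
    ultimately show ?thesis
      using Cons.IH[of bs' k'] Cons.prems k False \<open>us \<noteq> []\<close>
      by (simp add: bs interleave_Cons take_Cons')
  qed
qed simp

lemma infix_between_interleave:
  assumes "length us = Suc (length bs)" "i < j" "j \<le> length us"
  shows "infix_between (interleave us bs) (marker_pos us i) (marker_pos us j) =
    interleave (take (j - i) (drop i us)) (take (j - i - 1) (drop i bs))"
proof -
  have "marker_pos us j = marker_pos us i + marker_pos (drop i us) (j - i)"
    using marker_pos_add[of us i "j - i"] assms(2) by simp
  then have "infix_between (interleave us bs) (marker_pos us i) (marker_pos us j) =
      take (marker_pos (drop i us) (j - i) - 1) (interleave (drop i us) (drop i bs))"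
    unfolding infix_between_def using drop_interleave[OF assms(1), of i] assms by simp
  also have "\<dots> = interleave (take (j - i) (drop i us)) (take (j - i - 1) (drop i bs))"
    using assms by (intro take_interleave) auto
  finally show ?thesis .
qed

definition split_block :: "nat \<Rightarrow> 'a list \<Rightarrow> 'a list \<Rightarrow> 'a list list \<Rightarrow> 'a list list" where
  "split_block k v w us = take k us @ v # w # drop (Suc k) us"

lemma split_block_0 [simp]: "split_block 0 v w (u # us) = v # w # us"
  by (simp add: split_block_def)

lemma split_block_Suc [simp]: "split_block (Suc k) v w (u # us) = u # split_block k v w us"
  by (simp add: split_block_def)

lemma length_split_block: "k < length us \<Longrightarrow> length (split_block k v w us) = Suc (length us)"
  by (simp add: split_block_def)

lemma interleave_split_block:
  "k < length us \<Longrightarrow> length us = Suc (length bs) \<Longrightarrow> us ! k = v @ c # w \<Longrightarrow>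
    interleave (split_block k v w us) (take k bs @ c # drop k bs) = interleave us bs"
proof (induction k arbitrary: us bs)
  case 0
  then obtain u us' where us: "us = u # us'"
    by (cases us) auto
  have "interleave ((v @ [c] @ w) # us') bs = v @ c # interleave (w # us') bs"
    by (simp only: interleave_Cons_append) simp
  then show ?case
    using 0 us by (simp add: interleave_Cons)
next
  case (Suc k)
  then obtain u us' b bs' where "us = u # us'" "bs = b # bs'"
    by (cases us; cases bs) auto
  moreover have "us' \<noteq> []"
    using Suc.prems \<open>us = u # us'\<close> by auto
  ultimately show ?case
    using Suc.IH[of us' bs'] Suc.prems by (simp add: interleave_Cons split_block_def)
qed

lemma marker_pos_split_block_le:
  "j \<le> k \<Longrightarrow> k < length us \<Longrightarrow> marker_pos (split_block k v w us) j = marker_pos us j"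
proof (induction k arbitrary: us j)
  case (Suc k)
  then obtain u us' where "us = u # us'"
    by (cases us) auto
  then show ?case
    using Suc.IH[of "j - 1" us'] Suc.prems by (cases j) auto
qed simp

lemma marker_pos_split_block_gt:
  "k < j \<Longrightarrow> k < length us \<Longrightarrow> us ! k = v @ c # w \<Longrightarrow>
    marker_pos (split_block k v w us) (Suc j) = marker_pos us j"
proof (induction k arbitrary: us j)
  case 0
  then obtain u us' j' where "us = u # us'" "j = Suc j'"
    by (cases us; cases j) auto
  then show ?case
    using 0 by simp
next
  case (Suc k)
  then obtain u us' j' where "us = u # us'" "j = Suc j'"
    by (cases us; cases j) auto
  then show ?case
    using Suc.IH[of j' us'] Suc.prems by simp
qed

lemma marker_pos_split_block_new:
  "k < length us \<Longrightarrow> marker_pos (split_block k v w us) (Suc k) = marker_pos us k + Suc (length v)"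
proof (induction k arbitrary: us)
  case 0
  then show ?case
    by (cases us) auto
next
  case (Suc k)
  then obtain u us' where "us = u # us'"
    by (cases us) auto
  then show ?case
    using Suc.IH[of us'] Suc.prems by simp
qed

lemma between_markers_split:
  assumes "k < length us" "marker_pos us k < i" "i < marker_pos us (Suc k)"
  obtains v c w where "us ! k = v @ c # w" "i = marker_pos us k + Suc (length v)"
proof -
  define r where "r = i - marker_pos us k - 1"
  have "r < length (us ! k)"
    using assms marker_pos_Suc[OF assms(1)] by (simp add: r_def)
  then have "us ! k = take r (us ! k) @ us ! k ! r # drop (Suc r) (us ! k)"
    "i = marker_pos us k + Suc (length (take r (us ! k)))"
    using assms(2) by (simp_all add: id_take_nth_drop r_def)
  then show ?thesis
    by (rule that)
qed

lemma nat_le_grid_cases: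
  "(i::nat) \<le> p m \<Longrightarrow> p 0 = 0 \<Longrightarrow> (\<exists>k\<le>m. i = p k) \<or> (\<exists>k<m. p k < i \<and> i < p (Suc k))"
proof (induction m)
  case (Suc m)
  show ?case
  proof (cases "i \<le> p m")
    case True
    then show ?thesis
      using Suc.IH Suc.prems(2) by (auto intro: le_SucI less_SucI)
  next
    case False
    show ?thesis
    proof (cases "i = p (Suc m)")
      case True
      then show ?thesis
        by (intro disjI1 exI[of _ "Suc m"]) simp
    next
      case False
      then show ?thesis
        using \<open>\<not> i \<le> p m\<close> Suc.prems by (intro disjI2 exI[of _ m]) auto
    qed
  qed
qed simp

section \<open>Finite unions of boxes\<close>

lemma in_listset_iff: "us \<in> listset Ls \<longleftrightarrow> list_all2 (\<in>) us Ls"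
  by (induction Ls arbitrary: us) (auto simp: set_Cons_def list_all2_Cons2)

lemma in_listset_conv_nth:
  "us \<in> listset Ls \<longleftrightarrow> length us = length Ls \<and> (\<forall>j < length Ls. us ! j \<in> Ls ! j)"
  by (auto simp: in_listset_iff list_all2_conv_all_nth)

lemma listset_replicate_UNIV: "listset (replicate m UNIV) = {us. length us = m}"
  by (auto simp: in_listset_conv_nth)

lemma listset_Int:
  "length Ls = length Ks \<Longrightarrow> listset Ls \<inter> listset Ks = listset (map2 (\<inter>) Ls Ks)"
  by (auto simp: in_listset_conv_nth)

inductive SF_box_union :: "'a list set set \<Rightarrow> nat \<Rightarrow> 'a list list set \<Rightarrow> bool" for C m where
  empty: "SF_box_union C m {}"
| box: "length Ls = m \<Longrightarrow> set Ls \<subseteq> SF C \<Longrightarrow> SF_box_union C m (listset Ls)"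
| union: "SF_box_union C m S \<Longrightarrow> SF_box_union C m T \<Longrightarrow> SF_box_union C m (S \<union> T)"

lemma SF_box_union_UN:
  "finite I \<Longrightarrow> (\<And>i. i \<in> I \<Longrightarrow> SF_box_union C m (S i)) \<Longrightarrow> SF_box_union C m (\<Union>i\<in>I. S i)"
  by (induction I rule: finite_induct) (auto intro: SF_box_union.intros)

lemma SF_box_union_all: "SF_box_union C m {us. length us = m}"
proof -
  have "set (replicate m UNIV) \<subseteq> SF C"
    by (auto simp: SF_UNIV)
  then show ?thesis
    using SF_box_union.box[of "replicate m UNIV" m C] by (simp add: listset_replicate_UNIV)
qed

lemma SF_box_union_additive_image:
  assumes "SF_box_union C m S"
    and "F {} = {}" "\<And>S T. F (S \<union> T) = F S \<union> F T"
    and "\<And>Ls. length Ls = m \<Longrightarrow> set Ls \<subseteq> SF C \<Longrightarrow> SF_box_union C n (F (listset Ls))"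
  shows "SF_box_union C n (F S)"
  using assms(1) by induction (auto simp: assms(2,3) intro: assms(4) SF_box_union.intros)

lemma SF_box_union_Int:
  assumes "SF_box_union C m S" "SF_box_union C m T"
  shows "SF_box_union C m (S \<inter> T)"
proof -
  have box_Int: "SF_box_union C m (listset Ls \<inter> T)" if "length Ls = m" "set Ls \<subseteq> SF C" for Ls
  proof (rule SF_box_union_additive_image[OF assms(2), where F = "\<lambda>T. listset Ls \<inter> T"])
    fix Ks :: "'a list set list" assume "length Ks = m" "set Ks \<subseteq> SF C"
    then show "SF_box_union C m (listset Ls \<inter> listset Ks)"
      using that by (auto simp: listset_Int intro!: SF_box_union.box SF_Int elim!: in_set_zipE)
  qed auto
  show ?thesis
  proof (rule SF_box_union_additive_image[OF assms(1), where F = "\<lambda>S. S \<inter> T"])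
    fix Ls :: "'a list set list" assume "length Ls = m" "set Ls \<subseteq> SF C"
    then show "SF_box_union C m (listset Ls \<inter> T)"
      by (rule box_Int)
  qed auto
qed

lemma SF_box_union_Diff_listset:
  assumes "length Ls = m" "set Ls \<subseteq> SF C"
  shows "SF_box_union C m ({us. length us = m} - listset Ls)"
proof -
  have "{us. length us = m} - listset Ls = (\<Union>j<m. listset ((replicate m UNIV)[j := - (Ls ! j)]))"
    using assms(1) by (auto simp: in_listset_conv_nth nth_list_update) (metis Compl_iff)
  also have "SF_box_union C m \<dots>"
  proof (rule SF_box_union_UN)
    fix j assume "j \<in> {..<m}"
    then have "- (Ls ! j) \<in> SF C"
      using assms by (auto intro!: SF.compl)
    then show "SF_box_union C m (listset ((replicate m UNIV)[j := - (Ls ! j)]))"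
      using SF_UNIV by (intro SF_box_union.box) (auto dest!: set_update_subset_insert[THEN subsetD])
  qed simp
  finally show ?thesis .
qed

lemma SF_box_union_Diff:
  assumes "SF_box_union C m S"
  shows "SF_box_union C m ({us. length us = m} - S)"
  using assms
proof induction
  case empty
  then show ?case
    using SF_box_union_all by simp
next
  case (box Ls)
  then show ?case
    by (rule SF_box_union_Diff_listset)
next
  case (union S T)
  then show ?case
    using SF_box_union_Int[OF union.IH] by (simp add: Diff_Un)
qed

lemma SF_box_union_set_Cons:
  assumes "P \<in> SF C" "SF_box_union C m S"
  shows "SF_box_union C (Suc m) (set_Cons P S)"
  by (rule SF_box_union_additive_image[OF assms(2)])
    (use assms(1) in \<open>auto simp: set_Cons_def intro: SF_box_union.box[of "P # _", simplified]\<close>)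

lemma listset_window:
  assumes "length Ls = k" "a + k \<le> m"
  shows "{us. length us = m \<and> take k (drop a us) \<in> listset Ls} =
    listset (replicate a UNIV @ Ls @ replicate (m - a - k) UNIV)"
proof (intro set_eqI iffI)
  fix us assume us: "us \<in> {us. length us = m \<and> take k (drop a us) \<in> listset Ls}"
  have "us ! j \<in> (replicate a UNIV @ Ls @ replicate (m - a - k) UNIV) ! j" if "j < m" for j
  proof (cases "a \<le> j \<and> j < a + k")
    case True
    have "\<forall>i<k. us ! (a + i) \<in> Ls ! i"
      using us assms by (auto simp: in_listset_conv_nth)
    moreover have window: "j - a < k"
      using True by arith
    ultimately have "us ! (a + (j - a)) \<in> Ls ! (j - a)"
      by blast
    then show ?thesis
      using True window assms by (simp add: nth_append)
  qed (use assms that in \<open>auto simp: nth_append\<close>)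
  then show "us \<in> listset (replicate a UNIV @ Ls @ replicate (m - a - k) UNIV)"
    using us assms by (simp add: in_listset_conv_nth)
next
  fix us assume us: "us \<in> listset (replicate a UNIV @ Ls @ replicate (m - a - k) UNIV)"
  then have len: "length us = m"
    using assms by (simp add: in_listset_conv_nth)
  have "take k (drop a us) ! j \<in> Ls ! j" if "j < k" for j
  proof -
    have "us ! (a + j) \<in> (replicate a UNIV @ Ls @ replicate (m - a - k) UNIV) ! (a + j)"
      using us that assms by (auto simp: in_listset_conv_nth)
    then show ?thesis
      using that assms len by (simp add: nth_append)
  qed
  then show "us \<in> {us. length us = m \<and> take k (drop a us) \<in> listset Ls}"
    using len assms by (simp add: in_listset_conv_nth)
qed

lemma SF_box_union_window:
  assumes "SF_box_union C k S" "a + k \<le> m"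
  shows "SF_box_union C m {us. length us = m \<and> take k (drop a us) \<in> S}"
proof (rule SF_box_union_additive_image[OF assms(1)])
  fix Ls :: "'a list set list" assume "length Ls = k" "set Ls \<subseteq> SF C"
  then show "SF_box_union C m {us. length us = m \<and> take k (drop a us) \<in> listset Ls}"
    using assms(2) by (auto simp: listset_window SF_UNIV intro!: SF_box_union.box)
qed auto

lemma in_conc_letter_conc:
  "x \<in> conc (conc A {[c]}) B \<longleftrightarrow> (\<exists>v w. x = v @ c # w \<and> v \<in> A \<and> w \<in> B)"
proof
  assume "x \<in> conc (conc A {[c]}) B"
  then obtain v w where "x = (v @ [c]) @ w" "v \<in> A" "w \<in> B"
    by (auto elim!: concE)
  then show "\<exists>v w. x = v @ c # w \<and> v \<in> A \<and> w \<in> B"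
    by auto
next
  assume "\<exists>v w. x = v @ c # w \<and> v \<in> A \<and> w \<in> B"
  then obtain v w where "x = (v @ [c]) @ w" "v \<in> A" "w \<in> B"
    by auto
  then show "x \<in> conc (conc A {[c]}) B"
    by (auto intro: concI)
qed

lemma listset_merge:
  "{us. length us = Suc (length Ks + length Ms) \<and>
       (\<exists>v w. us ! length Ks = v @ c # w \<and> split_block (length Ks) v w us \<in> listset (Ks @ A # B # Ms))} =
   listset (Ks @ conc (conc A {[c]}) B # Ms)"
proof (intro set_eqI)
  fix us :: "'a list list"
  show "us \<in> {us. length us = Suc (length Ks + length Ms) \<and>
          (\<exists>v w. us ! length Ks = v @ c # w \<and> split_block (length Ks) v w us \<in> listset (Ks @ A # B # Ms))} \<longleftrightarrow>
        us \<in> listset (Ks @ conc (conc A {[c]}) B # Ms)"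
  proof (cases "length us = Suc (length Ks + length Ms)")
    case True
    then obtain xs y zs where us: "us = xs @ y # zs" "length Ks = length xs"
      by (metis id_take_nth_drop length_take less_add_Suc1 min_absorb2 less_imp_le)
    show ?thesis
      using True by (auto simp: us split_block_def in_listset_iff list_all2_append in_conc_letter_conc)
  qed (auto simp: in_listset_iff dest: list_all2_lengthD)
qed

lemma SF_box_union_merge:
  assumes "SF_box_union C (Suc m) S" "k < m"
  shows "SF_box_union C m {us. length us = m \<and> (\<exists>v w. us ! k = v @ c # w \<and> split_block k v w us \<in> S)}"
proof (rule SF_box_union_additive_image[OF assms(1)])
  fix Ls :: "'a list set list" assume Ls: "length Ls = Suc m" "set Ls \<subseteq> SF C"
  define Ks A B Ms where "Ks = take k Ls" and "A = Ls ! k" and "B = Ls ! Suc k"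
    and "Ms = drop (Suc (Suc k)) Ls"
  have decomp: "Ls = Ks @ A # B # Ms" and k: "k = length Ks" and m: "m = Suc (length Ks + length Ms)"
    using Ls(1) assms(2) by (simp_all add: Ks_def A_def B_def Ms_def Cons_nth_drop_Suc)
  have "conc (conc A {[c]}) B \<in> SF C"
    using Ls assms(2) by (intro SF.concat SF.letter) (auto simp: A_def B_def)
  moreover have "set Ks \<subseteq> SF C" "set Ms \<subseteq> SF C"
    using Ls(2) by (auto simp: Ks_def Ms_def dest: in_set_takeD in_set_dropD)
  ultimately show "SF_box_union C m
      {us. length us = m \<and> (\<exists>v w. us ! k = v @ c # w \<and> split_block k v w us \<in> listset Ls)}"
    unfolding decomp k m listset_merge by (auto intro!: SF_box_union.box)
qed auto

lemma SF_box_union_singletons: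
  assumes "SF_box_union C (Suc 0) S"
  shows "{u. [u] \<in> S} \<in> SF C"
  using assms
proof induction
  case empty
  then show ?case
    using SF_empty by simp
next
  case (box Ls)
  then obtain L where "Ls = [L]"
    by (metis length_0_conv length_Suc_conv)
  then show ?case
    using box.hyps(2) by (simp add: set_Cons_def)
next
  case (union S T)
  then show ?case
    using SF.union by (simp add: Collect_disj_eq)
qed

section \<open>Definable languages are star-free\<close>

lemma SF_box_union_interleave:
  assumes "prevariety C" "L \<in> SF (C :: ('a::finite) list set set)"
  shows "SF_box_union C (Suc (length bs)) {us. length us = Suc (length bs) \<and> interleave us bs \<in> L}"
  using assms(2)
proof (induction bs arbitrary: L)
  case Nil
  have "{us. length us = Suc 0 \<and> interleave us [] \<in> L} = listset [L]"
    by (auto simp: set_Cons_def length_Suc_conv)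
  then show ?case
    using Nil SF_box_union.box[of "[L]"] by simp
next
  case (Cons b bs)
  obtain PS where PS: "finite PS" "PS \<subseteq> SF C \<times> SF C"
    "\<And>v z. v @ z \<in> L \<longleftrightarrow> (\<exists>(P, K) \<in> PS. v \<in> P \<and> z \<in> K)"
    using SF_product_decomposition[OF assms(1) Cons.prems] by blast
  have "interleave (v # vs) (b # bs) \<in> L \<longleftrightarrow> (\<exists>p \<in> PS. v \<in> fst p \<and> interleave vs bs \<in> lquot [b] (snd p))"
    if "length vs = Suc (length bs)" for v vs
    using that PS(3) by (cases vs) (auto simp: lquot_def split_beta)
  then have "{us. length us = Suc (length (b # bs)) \<and> interleave us (b # bs) \<in> L} =
      (\<Union>p\<in>PS. set_Cons (fst p) {vs. length vs = Suc (length bs) \<and> interleave vs bs \<in> lquot [b] (snd p)})"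
    by (fastforce simp: set_Cons_def length_Suc_conv)
  moreover have "SF_box_union C (Suc (length (b # bs)))
      (set_Cons (fst p) {vs. length vs = Suc (length bs) \<and> interleave vs bs \<in> lquot [b] (snd p)})"
    if "p \<in> PS" for p
    using that PS(2) lquot_SF[OF assms(1)] by (auto intro!: SF_box_union_set_Cons Cons.IH)
  ultimately show ?case
    using PS(1) by (simp add: SF_box_union_UN)
qed

definition marked_models :: "(nat \<Rightarrow> nat) \<Rightarrow> 'a list \<Rightarrow> 'a fo \<Rightarrow> 'a list list set" where
  "marked_models f bs \<phi> =
     {us. length us = Suc (length bs) \<and> sat (interleave us bs) (\<lambda>y. marker_pos us (f y)) \<phi>}"

text \<open>Indices beyond the last marker denote max, since marker_pos saturates there.\<close>

fun marker_index :: "(nat \<Rightarrow> nat) \<Rightarrow> nat \<Rightarrow> fo_term \<Rightarrow> nat" where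
  "marker_index f m (FVar x) = min (f x) m"
| "marker_index f m FMin = 0"
| "marker_index f m FMax = m"

lemma marker_index_le: "marker_index f m t \<le> m"
  by (cases t) auto

lemma tval_interleave:
  "length us = Suc (length bs) \<Longrightarrow>
    tval (interleave us bs) (\<lambda>y. marker_pos us (f y)) t = marker_pos us (marker_index f (length us) t)"
proof (cases t)
  case (FVar x)
  assume "length us = Suc (length bs)"
  then show ?thesis
    using FVar marker_pos_min_length[of us "f x"] by simp
qed (simp_all add: length_interleave)

lemma marked_models_FEq:
  "marked_models f bs (FEq s t) =
    (if marker_index f (Suc (length bs)) s = marker_index f (Suc (length bs)) t
     then {us. length us = Suc (length bs)} else {})"
  by (auto simp: marked_models_def tval_interleave marker_pos_eq_iff marker_index_le)

lemma marked_models_FLabel: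
  "marked_models f bs (FLabel a t) =
    (let k = marker_index f (Suc (length bs)) t in
     if 0 < k \<and> k < Suc (length bs) \<and> bs ! (k - 1) = a
     then {us. length us = Suc (length bs)} else {})"
proof (intro set_eqI)
  fix us :: "'a list list"
  let ?k = "marker_index f (Suc (length bs)) t"
  show "us \<in> marked_models f bs (FLabel a t) \<longleftrightarrow> us \<in> (let k = ?k in
     if 0 < k \<and> k < Suc (length bs) \<and> bs ! (k - 1) = a then {us. length us = Suc (length bs)} else {})"
  proof (cases "length us = Suc (length bs)")
    case True
    have k: "?k \<le> length us"
      using marker_index_le True by simp
    have "1 \<le> marker_pos us ?k \<longleftrightarrow> 0 < ?k"
      using marker_pos_strict_mono[of 0 ?k us] k by (cases "?k = 0") auto
    moreover have "marker_pos us ?k \<le> length (interleave us bs) \<longleftrightarrow> ?k < length us"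
      using marker_pos_strict_mono[of ?k "length us" us] k length_interleave[OF True]
      by (cases "?k = length us") auto
    moreover have "0 < ?k \<Longrightarrow> ?k < length us \<Longrightarrow> interleave us bs ! (marker_pos us ?k - 1) = bs ! (?k - 1)"
      using True by (intro nth_interleave_marker_pos) auto
    ultimately show ?thesis
      using True by (auto simp: marked_models_def tval_interleave Let_def)
  qed (auto simp: marked_models_def Let_def)
qed

lemma SF_box_union_marked_models_FInf:
  assumes "prevariety C" "L \<in> SF (C :: ('a::finite) list set set)"
  shows "SF_box_union C (Suc (length bs)) (marked_models f bs (FInf L s t))"
proof -
  let ?m = "Suc (length bs)"
  let ?i = "marker_index f ?m s" and ?j = "marker_index f ?m t"
  show ?thesis
  proof (cases "?i < ?j")
    case False
    then have "\<not> marker_pos us ?i < marker_pos us ?j" for us :: "'a list list"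
      using marker_pos_mono[of ?j ?i us] by simp
    then have "marked_models f bs (FInf L s t) = {}"
      by (auto simp: marked_models_def tval_interleave Let_def)
    then show ?thesis
      by (simp add: SF_box_union.empty)
  next
    case True
    let ?bs = "take (?j - ?i - 1) (drop ?i bs)"
    have j: "?j \<le> ?m"
      by (rule marker_index_le)
    then have len: "Suc (length ?bs) = ?j - ?i"
      using True by auto
    have "us \<in> marked_models f bs (FInf L s t) \<longleftrightarrow>
        length us = ?m \<and> interleave (take (?j - ?i) (drop ?i us)) ?bs \<in> L" for us
    proof (cases "length us = ?m")
      case True
      then have "marker_pos us ?i < marker_pos us ?j"
        using marker_pos_strict_mono[OF \<open>?i < ?j\<close>, of us] j by simp
      then show ?thesis
        using True \<open>?i < ?j\<close> j
        by (simp add: marked_models_def tval_interleave Let_def infix_between_interleave)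
    qed (simp add: marked_models_def)
    then have "marked_models f bs (FInf L s t) =
        {us. length us = ?m \<and> take (Suc (length ?bs)) (drop ?i us) \<in>
          {vs. length vs = Suc (length ?bs) \<and> interleave vs ?bs \<in> L}}"
      using j len by auto
    also have "SF_box_union C ?m \<dots>"
      using True j len by (intro SF_box_union_window SF_box_union_interleave assms) auto
    finally show ?thesis .
  qed
qed

lemma positions_interleave:
  assumes "length us = Suc (length bs)"
  shows "{..Suc (length (interleave us bs))} =
    marker_pos us ` {..length us} \<union>
    {marker_pos us k + Suc (length v) | k v c w. k < length us \<and> us ! k = v @ c # w}"
proof (intro set_eqI iffI)
  fix i assume "i \<in> {..Suc (length (interleave us bs))}"
  then have "i \<le> marker_pos us (length us)"
    using length_interleave[OF assms] by simp
  then consider k where "k \<le> length us" "i = marker_pos us k"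
    | k where "k < length us" "marker_pos us k < i" "i < marker_pos us (Suc k)"
    using nat_le_grid_cases[of i "marker_pos us" "length us"] by auto
  then show "i \<in> marker_pos us ` {..length us} \<union>
      {marker_pos us k + Suc (length v) | k v c w. k < length us \<and> us ! k = v @ c # w}"
  proof cases
    case (2 k)
    then obtain v c w where "us ! k = v @ c # w" "i = marker_pos us k + Suc (length v)"
      by (rule between_markers_split)
    then show ?thesis
      using 2 by blast
  qed auto
next
  fix i assume i: "i \<in> marker_pos us ` {..length us} \<union>
      {marker_pos us k + Suc (length v) | k v c w. k < length us \<and> us ! k = v @ c # w}"
  have "i \<le> marker_pos us (length us)"
  proof (cases "i \<in> marker_pos us ` {..length us}")
    case False
    then obtain k v c w where "k < length us" "us ! k = v @ c # w" "i = marker_pos us k + Suc (length v)"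
      using i by blast
    then have "i \<le> marker_pos us (Suc k)"
      by (simp add: marker_pos_Suc)
    then show ?thesis
      using marker_pos_mono[of "Suc k" "length us" us] \<open>k < length us\<close> by simp
  qed (auto intro: marker_pos_mono)
  then show "i \<in> {..Suc (length (interleave us bs))}"
    using length_interleave[OF assms] by simp
qed

text \<open>Renumbering of the markers when a new one is inserted right after marker k.\<close>

definition shift_markers :: "nat \<Rightarrow> (nat \<Rightarrow> nat) \<Rightarrow> nat \<Rightarrow> nat" where
  "shift_markers k f y = (if f y \<le> k then f y else Suc (f y))"

lemma marker_pos_split_block_assignment:
  assumes "k < length us" "us ! k = v @ c # w"
  shows "(\<lambda>y. marker_pos (split_block k v w us) (((shift_markers k f)(x := Suc k)) y)) =
    (\<lambda>y. marker_pos us (f y))(x := marker_pos us k + Suc (length v))"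
  using assms marker_pos_split_block_le[OF _ assms(1)] marker_pos_split_block_gt[OF _ assms]
    marker_pos_split_block_new[OF assms(1)]
  by (auto simp: shift_markers_def)

lemma marked_models_fun_upd_iff:
  assumes "length us = Suc (length bs)"
  shows "us \<in> marked_models (f(x := k)) bs \<phi> \<longleftrightarrow>
    sat (interleave us bs) ((\<lambda>y. marker_pos us (f y))(x := marker_pos us k)) \<phi>"
proof -
  have "(\<lambda>y. marker_pos us ((f(x := k)) y)) = (\<lambda>y. marker_pos us (f y))(x := marker_pos us k)"
    by auto
  then show ?thesis
    using assms unfolding marked_models_def mem_Collect_eq by simp
qed

lemma marked_models_split_block_iff:
  assumes "length us = Suc (length bs)" "k < length us" "us ! k = v @ c # w"
  shows "split_block k v w us \<in> marked_models ((shift_markers k f)(x := Suc k)) (take k bs @ c # drop k bs) \<phi> \<longleftrightarrow>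
    sat (interleave us bs) ((\<lambda>y. marker_pos us (f y))(x := marker_pos us k + Suc (length v))) \<phi>"
proof -
  have "interleave (split_block k v w us) (take k bs @ c # drop k bs) = interleave us bs"
    using assms by (intro interleave_split_block) auto
  then show ?thesis
    using assms
    unfolding marked_models_def mem_Collect_eq marker_pos_split_block_assignment[OF assms(2,3)]
    by (simp add: length_split_block)
qed

lemma marked_models_FEx_iff:
  assumes "length us = Suc (length bs)"
  shows "us \<in> marked_models f bs (FEx x \<phi>) \<longleftrightarrow>
    (\<exists>k \<le> length us. us \<in> marked_models (f(x := k)) bs \<phi>) \<or>
    (\<exists>k v c w. k < length us \<and> us ! k = v @ c # w \<and>
       split_block k v w us \<in> marked_models ((shift_markers k f)(x := Suc k)) (take k bs @ c # drop k bs) \<phi>)"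
proof -
  let ?w = "interleave us bs" and ?\<sigma> = "\<lambda>y. marker_pos us (f y)"
  have "us \<in> marked_models f bs (FEx x \<phi>) \<longleftrightarrow> (\<exists>i \<in> {..Suc (length ?w)}. sat ?w (?\<sigma>(x := i)) \<phi>)"
    using assms by (auto simp: marked_models_def)
  also have "\<dots> \<longleftrightarrow> (\<exists>k \<le> length us. sat ?w (?\<sigma>(x := marker_pos us k)) \<phi>) \<or>
      (\<exists>k v c w. k < length us \<and> us ! k = v @ c # w \<and>
         sat ?w (?\<sigma>(x := marker_pos us k + Suc (length v))) \<phi>)"
    unfolding positions_interleave[OF assms] by blast
  also have "\<dots> \<longleftrightarrow> (\<exists>k \<le> length us. us \<in> marked_models (f(x := k)) bs \<phi>) \<or>
      (\<exists>k v c w. k < length us \<and> us ! k = v @ c # w \<and>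
         split_block k v w us \<in> marked_models ((shift_markers k f)(x := Suc k)) (take k bs @ c # drop k bs) \<phi>)"
    by (simp add: marked_models_fun_upd_iff[OF assms] marked_models_split_block_iff[OF assms] cong: conj_cong)
  finally show ?thesis .
qed

lemma marked_models_FEx:
  "marked_models f bs (FEx x \<phi>) =
    (\<Union>k\<le>Suc (length bs). marked_models (f(x := k)) bs \<phi>) \<union>
    (\<Union>k<Suc (length bs). \<Union>c. {us. length us = Suc (length bs) \<and>
       (\<exists>v w. us ! k = v @ c # w \<and>
          split_block k v w us \<in> marked_models ((shift_markers k f)(x := Suc k)) (take k bs @ c # drop k bs) \<phi>)})"
proof (intro set_eqI)
  fix us :: "'a list list"
  show "us \<in> marked_models f bs (FEx x \<phi>) \<longleftrightarrow> us \<in>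
    (\<Union>k\<le>Suc (length bs). marked_models (f(x := k)) bs \<phi>) \<union>
    (\<Union>k<Suc (length bs). \<Union>c. {us. length us = Suc (length bs) \<and>
       (\<exists>v w. us ! k = v @ c # w \<and>
          split_block k v w us \<in> marked_models ((shift_markers k f)(x := Suc k)) (take k bs @ c # drop k bs) \<phi>)})"
  proof (cases "length us = Suc (length bs)")
    case True
    then show ?thesis
      unfolding marked_models_FEx_iff[OF True] by auto
  qed (auto simp: marked_models_def)
qed

lemma SF_box_union_marked_models:
  assumes "prevariety C" "preds \<phi> \<subseteq> (C :: ('a::finite) list set set)"
  shows "SF_box_union C (Suc (length bs)) (marked_models f bs \<phi>)"
  using assms(2)
proof (induction \<phi> arbitrary: f bs)
  case (FEq s t)
  then show ?case
    by (simp add: marked_models_FEq SF_box_union_all SF_box_union.empty)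
next
  case (FLabel a t)
  then show ?case
    by (simp add: marked_models_FLabel Let_def SF_box_union_all SF_box_union.empty)
next
  case (FInf L s t)
  then show ?case
    by (simp add: SF_box_union_marked_models_FInf[OF assms(1)] SF.base)
next
  case (FOr \<phi>1 \<phi>2)
  have "marked_models f bs (FOr \<phi>1 \<phi>2) = marked_models f bs \<phi>1 \<union> marked_models f bs \<phi>2"
    by (auto simp: marked_models_def)
  then show ?case
    using FOr by (auto intro: SF_box_union.union)
next
  case (FNeg \<phi>)
  have "marked_models f bs (FNeg \<phi>) = {us. length us = Suc (length bs)} - marked_models f bs \<phi>"
    by (auto simp: marked_models_def)
  then show ?case
    using FNeg by (simp add: SF_box_union_Diff)
next
  case (FEx x \<phi>)
  have "SF_box_union C (Suc (length bs)) {us. length us = Suc (length bs) \<and>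
       (\<exists>v w. us ! k = v @ c # w \<and>
          split_block k v w us \<in> marked_models ((shift_markers k f)(x := Suc k)) (take k bs @ c # drop k bs) \<phi>)}"
    if "k < Suc (length bs)" for k c
  proof (rule SF_box_union_merge[OF _ that])
    have "length (take k bs @ c # drop k bs) = Suc (length bs)"
      using that by simp
    then show "SF_box_union C (Suc (Suc (length bs)))
        (marked_models ((shift_markers k f)(x := Suc k)) (take k bs @ c # drop k bs) \<phi>)"
      using FEx.IH[of "take k bs @ c # drop k bs"] FEx.prems by simp
  qed
  then show ?case
    unfolding marked_models_FEx using FEx
    by (intro SF_box_union.union SF_box_union_UN) auto
qed

lemma FO_I_subset_SF:
  assumes "prevariety C"
  shows "FO_I C \<subseteq> SF (C :: ('a::finite) list set set)"
proof
  fix L assume "L \<in> FO_I C"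
  then obtain \<phi> where \<phi>: "preds \<phi> \<subseteq> C" and L: "L = {w. sat w (\<lambda>_. 0) \<phi>}"
    unfolding FO_I_def by blast
  have "L = {u. [u] \<in> marked_models (\<lambda>_. 0) [] \<phi>}"
    by (simp add: L marked_models_def)
  then show "L \<in> SF C"
    using SF_box_union_singletons[OF SF_box_union_marked_models[OF assms \<phi>, where bs = "[]", simplified]] by simp
qed

section \<open>Star-free languages are definable\<close>

definition FAnd :: "'a fo \<Rightarrow> 'a fo \<Rightarrow> 'a fo" where
  "FAnd \<phi> \<psi> = FNeg (FOr (FNeg \<phi>) (FNeg \<psi>))"

definition FLt :: "fo_term \<Rightarrow> fo_term \<Rightarrow> 'a fo" where
  "FLt s t = FInf UNIV s t"

definition FLe :: "fo_term \<Rightarrow> fo_term \<Rightarrow> 'a fo" where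
  "FLe s t = FOr (FEq s t) (FLt s t)"

lemma sat_FAnd [simp]: "sat w \<sigma> (FAnd \<phi> \<psi>) \<longleftrightarrow> sat w \<sigma> \<phi> \<and> sat w \<sigma> \<psi>"
  by (simp add: FAnd_def)

lemma sat_FLt [simp]: "sat w \<sigma> (FLt s t) \<longleftrightarrow> tval w \<sigma> s < tval w \<sigma> t"
  by (simp add: FLt_def Let_def)

lemma sat_FLe [simp]: "sat w \<sigma> (FLe s t) \<longleftrightarrow> tval w \<sigma> s \<le> tval w \<sigma> t"
  by (auto simp: FLe_def)

lemma free_vars_FAnd [simp]: "free_vars (FAnd \<phi> \<psi>) = free_vars \<phi> \<union> free_vars \<psi>"
  by (simp add: FAnd_def)

lemma free_vars_FLt [simp]: "free_vars (FLt s t :: 'a fo) = tvars s \<union> tvars t"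
  by (simp add: FLt_def)

lemma free_vars_FLe [simp]: "free_vars (FLe s t :: 'a fo) = tvars s \<union> tvars t"
  by (simp add: FLe_def)

lemma preds_FAnd [simp]: "preds (FAnd \<phi> \<psi>) = preds \<phi> \<union> preds \<psi>"
  by (simp add: FAnd_def)

lemma preds_FLt [simp]: "preds (FLt s t :: 'a fo) = {UNIV}"
  by (simp add: FLt_def)

lemma preds_FLe [simp]: "preds (FLe s t :: 'a fo) = {UNIV}"
  by (simp add: FLe_def)

lemma tval_cong: "\<forall>y\<in>tvars t. \<sigma> y = \<sigma>' y \<Longrightarrow> tval w \<sigma> t = tval w \<sigma>' t"
  by (cases t) auto

lemma sat_cong: "\<forall>y\<in>free_vars \<phi>. \<sigma> y = \<sigma>' y \<Longrightarrow> sat w \<sigma> \<phi> \<longleftrightarrow> sat w \<sigma>' \<phi>"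
proof (induction \<phi> arbitrary: \<sigma> \<sigma>')
  case (FEq s t)
  then show ?case
    using tval_cong[of s \<sigma> \<sigma>' w] tval_cong[of t \<sigma> \<sigma>' w] by simp
next
  case (FLabel a t)
  then show ?case
    using tval_cong[of t \<sigma> \<sigma>' w] by simp
next
  case (FInf L s t)
  then show ?case
    using tval_cong[of s \<sigma> \<sigma>' w] tval_cong[of t \<sigma> \<sigma>' w] by simp
next
  case (FOr \<phi>1 \<phi>2)
  then show ?case
    by (metis UnCI free_vars.simps(4) sat.simps(4))
next
  case (FNeg \<phi>)
  then show ?case
    by simp
next
  case (FEx x \<phi>)
  then have "sat w (\<sigma>(x := i)) \<phi> \<longleftrightarrow> sat w (\<sigma>'(x := i)) \<phi>" for i
    by (intro FEx.IH) auto
  then show ?case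
    by simp
qed

fun bvars :: "'a fo \<Rightarrow> nat set" where
  "bvars (FEq s t) = {}"
| "bvars (FLabel a t) = {}"
| "bvars (FInf L s t) = {}"
| "bvars (FOr \<phi> \<psi>) = bvars \<phi> \<union> bvars \<psi>"
| "bvars (FNeg \<phi>) = bvars \<phi>"
| "bvars (FEx x \<phi>) = insert x (bvars \<phi>)"

lemma finite_bvars: "finite (bvars \<phi>)"
  by (induction \<phi>) auto

fun relativize_term :: "fo_term \<Rightarrow> fo_term \<Rightarrow> fo_term \<Rightarrow> fo_term" where
  "relativize_term l r (FVar x) = FVar x"
| "relativize_term l r FMin = l"
| "relativize_term l r FMax = r"

fun relativize :: "fo_term \<Rightarrow> fo_term \<Rightarrow> 'a fo \<Rightarrow> 'a fo" where
  "relativize l r (FEq s t) = FEq (relativize_term l r s) (relativize_term l r t)"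
| "relativize l r (FLabel a t) =
     FAnd (FLabel a (relativize_term l r t))
       (FAnd (FNeg (FEq (relativize_term l r t) l)) (FNeg (FEq (relativize_term l r t) r)))"
| "relativize l r (FInf L s t) = FInf L (relativize_term l r s) (relativize_term l r t)"
| "relativize l r (FOr \<phi> \<psi>) = FOr (relativize l r \<phi>) (relativize l r \<psi>)"
| "relativize l r (FNeg \<phi>) = FNeg (relativize l r \<phi>)"
| "relativize l r (FEx y \<phi>) = FEx y (FAnd (FAnd (FLe l (FVar y)) (FLe (FVar y) r)) (relativize l r \<phi>))"

lemma preds_relativize: "preds (relativize l r \<phi>) \<subseteq> insert UNIV (preds \<phi>)"
  by (induction \<phi>) auto

lemma tvars_relativize_term: "tvars (relativize_term l r t) \<subseteq> tvars t \<union> tvars l \<union> tvars r"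
  by (cases t) auto

lemma free_vars_relativize: "free_vars (relativize l r \<phi>) \<subseteq> free_vars \<phi> \<union> tvars l \<union> tvars r"
  by (induction \<phi>) (use tvars_relativize_term[of l r] in fastforce)+

lemma length_infix_between:
  "i < j \<Longrightarrow> j \<le> Suc (length w) \<Longrightarrow> length (infix_between w i j) = j - i - 1"
  by (simp add: infix_between_def)

lemma nth_infix_between:
  "a < i \<Longrightarrow> i < b \<Longrightarrow> b \<le> Suc (length w) \<Longrightarrow> infix_between w a b ! (i - a - 1) = w ! (i - 1)"
  by (simp add: infix_between_def nth_drop)

lemma infix_between_infix_between:
  assumes "a \<le> i" "i < j" "j \<le> b"
  shows "infix_between (infix_between w a b) (i - a) (j - a) = infix_between w i j"
proof -
  have "(j - a) - (i - a) - 1 = j - i - 1" "b - a - 1 - (i - a) = b - i - 1"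
    "i - a + a = i" "min (j - i - 1) (b - i - 1) = j - i - 1"
    using assms by auto
  then show ?thesis
    unfolding infix_between_def drop_take drop_drop take_take by simp
qed

lemma ex_shift_interval:
  assumes "a \<le> b"
  shows "(\<exists>i. a \<le> i \<and> i \<le> b \<and> P (i - a)) \<longleftrightarrow> (\<exists>j \<le> b - a. P (j :: nat))"
proof
  assume "\<exists>j \<le> b - a. P j"
  then obtain j where "j \<le> b - a" "P j"
    by blast
  then show "\<exists>i. a \<le> i \<and> i \<le> b \<and> P (i - a)"
    using assms by (intro exI[of _ "j + a"]) auto
next
  assume "\<exists>i. a \<le> i \<and> i \<le> b \<and> P (i - a)"
  then obtain i where "a \<le> i" "i \<le> b" "P (i - a)"
    by blast
  then show "\<exists>j \<le> b - a. P j"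
    by (intro exI[of _ "i - a"]) auto
qed

lemma tval_relativize_term:
  assumes "tval w \<sigma> l = a" "tval w \<sigma> r = b" "b \<le> Suc (length w)" "a < b"
    "\<forall>y\<in>tvars t. a \<le> \<sigma> y \<and> \<sigma> y \<le> b"
  shows "a \<le> tval w \<sigma> (relativize_term l r t)" "tval w \<sigma> (relativize_term l r t) \<le> b"
    "tval w \<sigma> (relativize_term l r t) - a = tval (infix_between w a b) (\<lambda>y. \<sigma> y - a) t"
  using assms by (cases t; auto simp: infix_between_def)+

lemma sat_relativize:
  assumes "tval w \<sigma> l = a" "tval w \<sigma> r = b" "b \<le> Suc (length w)" "a < b"
    and "\<forall>y\<in>free_vars \<phi>. a \<le> \<sigma> y \<and> \<sigma> y \<le> b"
    and "bvars \<phi> \<inter> (tvars l \<union> tvars r) = {}"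
  shows "sat w \<sigma> (relativize l r \<phi>) \<longleftrightarrow> sat (infix_between w a b) (\<lambda>y. \<sigma> y - a) \<phi>"
  using assms(1,2,5,6)
proof (induction \<phi> arbitrary: \<sigma>)
  note tv = tval_relativize_term[OF _ _ assms(3,4)]
  case (FEq s t)
  then show ?case
    using tv[OF FEq.prems(1,2), of s] tv[OF FEq.prems(1,2), of t] by auto
next
  note tv = tval_relativize_term[OF _ _ assms(3,4)]
  case (FLabel c t)
  let ?i = "tval w \<sigma> (relativize_term l r t)"
  have i: "a \<le> ?i" "?i \<le> b" "?i - a = tval (infix_between w a b) (\<lambda>y. \<sigma> y - a) t"
    using tv[OF FLabel.prems(1,2), of t] FLabel.prems by auto
  have "sat w \<sigma> (relativize l r (FLabel c t)) \<longleftrightarrow> a < ?i \<and> ?i < b \<and> w ! (?i - 1) = c"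
    using i FLabel.prems assms(3) by (auto simp: Let_def)
  also have "\<dots> \<longleftrightarrow> sat (infix_between w a b) (\<lambda>y. \<sigma> y - a) (FLabel c t)"
    using i assms(3,4) nth_infix_between[of a ?i b w]
    by (auto simp: Let_def length_infix_between simp flip: i(3))
  finally show ?case .
next
  note tv = tval_relativize_term[OF _ _ assms(3,4)]
  case (FInf L s t)
  let ?i = "tval w \<sigma> (relativize_term l r s)" and ?j = "tval w \<sigma> (relativize_term l r t)"
  have "a \<le> ?i" "?i \<le> b" "a \<le> ?j" "?j \<le> b"
    "?i - a = tval (infix_between w a b) (\<lambda>y. \<sigma> y - a) s"
    "?j - a = tval (infix_between w a b) (\<lambda>y. \<sigma> y - a) t"
    using tv[OF FInf.prems(1,2), of s] tv[OF FInf.prems(1,2), of t] FInf.prems by auto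
  then show ?case
    using infix_between_infix_between[of a ?i ?j b w] by (auto simp: Let_def)
next
  case (FOr \<phi>1 \<phi>2)
  then show ?case
    by (metis (no_types, lifting) Int_Un_distrib2 Un_iff bvars.simps(4) free_vars.simps(4)
        relativize.simps(4) sat.simps(4) sup_eq_bot_iff)
next
  case (FNeg \<phi>)
  then show ?case
    by simp
next
  case (FEx y \<phi>)
  have y: "y \<notin> tvars l" "y \<notin> tvars r"
    using FEx.prems(4) by auto
  have lr: "tval w (\<sigma>(y := i)) l = a" "tval w (\<sigma>(y := i)) r = b" for i
    using FEx.prems(1,2) y tval_cong[of l "\<sigma>(y := i)" \<sigma> w] tval_cong[of r "\<sigma>(y := i)" \<sigma> w] by auto
  have IH: "sat w (\<sigma>(y := i)) (relativize l r \<phi>) \<longleftrightarrow>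
      sat (infix_between w a b) ((\<lambda>z. \<sigma> z - a)(y := i - a)) \<phi>" if "a \<le> i" "i \<le> b" for i
  proof -
    have "sat w (\<sigma>(y := i)) (relativize l r \<phi>) \<longleftrightarrow>
        sat (infix_between w a b) (\<lambda>z. (\<sigma>(y := i)) z - a) \<phi>"
      using FEx.prems that by (intro FEx.IH[OF lr]) auto
    also have "(\<lambda>z. (\<sigma>(y := i)) z - a) = (\<lambda>z. \<sigma> z - a)(y := i - a)"
      by auto
    finally show ?thesis .
  qed
  have "sat w \<sigma> (relativize l r (FEx y \<phi>)) \<longleftrightarrow>
      (\<exists>i. a \<le> i \<and> i \<le> b \<and> sat w (\<sigma>(y := i)) (relativize l r \<phi>))"
    using lr assms(3) by (auto intro: le_trans)
  also have "\<dots> \<longleftrightarrow> (\<exists>i. a \<le> i \<and> i \<le> b \<and> sat (infix_between w a b) ((\<lambda>z. \<sigma> z - a)(y := i - a)) \<phi>)"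
    using IH by blast
  also have "\<dots> \<longleftrightarrow> (\<exists>j \<le> b - a. sat (infix_between w a b) ((\<lambda>z. \<sigma> z - a)(y := j)) \<phi>)"
    using assms(4)
    by (intro ex_shift_interval[where P = "\<lambda>j. sat (infix_between w a b) ((\<lambda>z. \<sigma> z - a)(y := j)) \<phi>"])
      simp
  also have "\<dots> \<longleftrightarrow> sat (infix_between w a b) (\<lambda>z. \<sigma> z - a) (FEx y \<phi>)"
    using assms(3,4) by (simp add: length_infix_between Suc_diff_Suc)
  finally show ?case .
qed

lemma sat_relativize_prefix:
  assumes "free_vars \<phi> = {}" "y \<notin> bvars \<phi>" "\<sigma> y = Suc i" "i \<le> length w"
  shows "sat w \<sigma> (relativize FMin (FVar y) \<phi>) \<longleftrightarrow> sat (take i w) (\<lambda>_. 0) \<phi>"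
proof -
  have "sat w \<sigma> (relativize FMin (FVar y) \<phi>) \<longleftrightarrow> sat (infix_between w 0 (Suc i)) (\<lambda>v. \<sigma> v - 0) \<phi>"
    using assms by (intro sat_relativize) auto
  also have "\<dots> \<longleftrightarrow> sat (take i w) (\<lambda>_. 0) \<phi>"
    using assms(1) sat_cong[of \<phi> _ "\<lambda>_. 0"] by (simp add: infix_between_def)
  finally show ?thesis .
qed

lemma sat_relativize_suffix:
  assumes "free_vars \<phi> = {}" "x \<notin> bvars \<phi>" "\<sigma> x = i" "i \<le> length w"
  shows "sat w \<sigma> (relativize (FVar x) FMax \<phi>) \<longleftrightarrow> sat (drop i w) (\<lambda>_. 0) \<phi>"
proof -
  have "sat w \<sigma> (relativize (FVar x) FMax \<phi>) \<longleftrightarrow> sat (infix_between w i (Suc (length w))) (\<lambda>v. \<sigma> v - i) \<phi>"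
    using assms by (intro sat_relativize) auto
  also have "\<dots> \<longleftrightarrow> sat (drop i w) (\<lambda>_. 0) \<phi>"
    using assms(1) sat_cong[of \<phi> _ "\<lambda>_. 0"] by (simp add: infix_between_def)
  finally show ?thesis .
qed

lemma ex_consecutive_iff:
  "(\<exists>i \<le> Suc n. \<exists>j \<le> Suc n. i < j \<and> \<not> (\<exists>k \<le> Suc n. i < k \<and> k < j) \<and> P i j) \<longleftrightarrow>
    (\<exists>i \<le> n. P i (Suc i))"
proof
  assume "\<exists>i \<le> Suc n. \<exists>j \<le> Suc n. i < j \<and> \<not> (\<exists>k \<le> Suc n. i < k \<and> k < j) \<and> P i j"
  then obtain i j where ij: "i < j" "j \<le> Suc n" "\<not> (\<exists>k \<le> Suc n. i < k \<and> k < j)" "P i j"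
    by blast
  then have "\<not> (Suc i \<le> Suc n \<and> i < Suc i \<and> Suc i < j)"
    by blast
  then have "j = Suc i"
    using ij(1,2) by auto
  then show "\<exists>i \<le> n. P i (Suc i)"
    using ij by auto
next
  assume "\<exists>i \<le> n. P i (Suc i)"
  then obtain i where "i \<le> n" "P i (Suc i)"
    by blast
  moreover have "i \<le> Suc n" "Suc i \<le> Suc n" "i < Suc i" "\<not> (\<exists>k \<le> Suc n. i < k \<and> k < Suc i)"
    using \<open>i \<le> n\<close> by auto
  ultimately show "\<exists>i \<le> Suc n. \<exists>j \<le> Suc n. i < j \<and> \<not> (\<exists>k \<le> Suc n. i < k \<and> k < j) \<and> P i j"
    by blast
qed

text \<open>
  x and Suc x are consecutive positions; \<phi> is checked strictly left of Suc x, \<psi> strictly right of x.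
\<close>

definition conc_formula :: "nat \<Rightarrow> 'a fo \<Rightarrow> 'a fo \<Rightarrow> 'a fo" where
  "conc_formula x \<phi> \<psi> =
     FEx x (FEx (Suc x) (FAnd
       (FAnd (FLt (FVar x) (FVar (Suc x)))
         (FNeg (FEx (Suc (Suc x)) (FAnd (FLt (FVar x) (FVar (Suc (Suc x)))) (FLt (FVar (Suc (Suc x))) (FVar (Suc x)))))))
       (FAnd (relativize FMin (FVar (Suc x)) \<phi>) (relativize (FVar x) FMax \<psi>))))"

lemma free_vars_conc_formula:
  assumes "free_vars \<phi> = {}" "free_vars \<psi> = {}"
  shows "free_vars (conc_formula x \<phi> \<psi>) = {}"
  using free_vars_relativize[of FMin "FVar (Suc x)" \<phi>] free_vars_relativize[of "FVar x" FMax \<psi>] assms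
  by (auto simp: conc_formula_def)

lemma preds_conc_formula: "preds (conc_formula x \<phi> \<psi>) \<subseteq> insert UNIV (preds \<phi> \<union> preds \<psi>)"
  using preds_relativize[of FMin "FVar (Suc x)" \<phi>] preds_relativize[of "FVar x" FMax \<psi>]
  by (auto simp: conc_formula_def)

lemma sat_conc_formula:
  assumes "free_vars \<phi> = {}" "free_vars \<psi> = {}" "\<forall>v \<in> bvars \<phi> \<union> bvars \<psi>. v < x"
  shows "sat w \<sigma> (conc_formula x \<phi> \<psi>) \<longleftrightarrow> w \<in> conc {w. sat w (\<lambda>_. 0) \<phi>} {w. sat w (\<lambda>_. 0) \<psi>}"
proof -
  let ?n = "length w" and ?\<sigma> = "\<lambda>i j. \<sigma>(x := i, Suc x := j)"
  have fresh: "Suc x \<notin> bvars \<phi>" "x \<notin> bvars \<psi>"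
    using assms(3) by (meson UnI1 UnI2 Suc_lessD less_irrefl)+
  have "sat w \<sigma> (conc_formula x \<phi> \<psi>) \<longleftrightarrow> (\<exists>i \<le> ?n.
      sat w (?\<sigma> i (Suc i)) (relativize FMin (FVar (Suc x)) \<phi>) \<and>
      sat w (?\<sigma> i (Suc i)) (relativize (FVar x) FMax \<psi>))"
    using ex_consecutive_iff[where P = "\<lambda>i j. sat w (?\<sigma> i j) (relativize FMin (FVar (Suc x)) \<phi>) \<and>
      sat w (?\<sigma> i j) (relativize (FVar x) FMax \<psi>)"]
    by (simp add: conc_formula_def)
  also have "\<dots> \<longleftrightarrow> (\<exists>i \<le> ?n. sat (take i w) (\<lambda>_. 0) \<phi> \<and> sat (drop i w) (\<lambda>_. 0) \<psi>)"
    using sat_relativize_prefix[OF assms(1) fresh(1)] sat_relativize_suffix[OF assms(2) fresh(2)]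
    by (intro ex_cong1 conj_cong refl) auto
  also have "\<dots> \<longleftrightarrow> w \<in> conc {w. sat w (\<lambda>_. 0) \<phi>} {w. sat w (\<lambda>_. 0) \<psi>}"
    by (simp add: conc_iff_take_drop)
  finally show ?thesis .
qed

lemma FO_I_intro: "free_vars \<phi> = {} \<Longrightarrow> preds \<phi> \<subseteq> C \<Longrightarrow> {w. sat w (\<lambda>_. 0) \<phi>} \<in> FO_I C"
  unfolding FO_I_def by blast

lemma FO_I_base: "L \<in> C \<Longrightarrow> L \<in> FO_I C"
  using FO_I_intro[of "FInf L FMin FMax" C] by (simp add: infix_between_def Let_def)

lemma sat_singleton_formula:
  "sat w \<sigma> (FEx 0 (FAnd (FLabel a (FVar 0))
      (FNeg (FEx 1 (FAnd (FNeg (FEq (FVar 1) FMin))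
        (FAnd (FNeg (FEq (FVar 1) (FVar 0))) (FNeg (FEq (FVar 1) FMax)))))))) \<longleftrightarrow> w = [a]"
proof
  assume "sat w \<sigma> (FEx 0 (FAnd (FLabel a (FVar 0))
      (FNeg (FEx 1 (FAnd (FNeg (FEq (FVar 1) FMin))
        (FAnd (FNeg (FEq (FVar 1) (FVar 0))) (FNeg (FEq (FVar 1) FMax))))))))"
  then obtain i where i: "1 \<le> i" "i \<le> length w" "w ! (i - 1) = a"
    and only: "\<forall>j \<le> Suc (length w). j = 0 \<or> j = i \<or> j = Suc (length w)"
    by (auto simp: Let_def)
  have "length w = 1"
  proof (rule ccontr)
    assume "length w \<noteq> 1"
    then have "2 \<le> length w"
      using i by auto
    then show False
      using i only[rule_format, of "if i = 1 then 2 else 1"] by (cases "i = 1") auto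
  qed
  then show "w = [a]"
    using i by (cases w) auto
qed (auto simp: Let_def)

lemma FO_I_singleton: "{[a]} \<in> FO_I C"
  using FO_I_intro[of "FEx 0 (FAnd (FLabel a (FVar 0))
      (FNeg (FEx 1 (FAnd (FNeg (FEq (FVar 1) FMin))
        (FAnd (FNeg (FEq (FVar 1) (FVar 0))) (FNeg (FEq (FVar 1) FMax)))))))" C]
  by (auto simp only: sat_singleton_formula) auto

lemma FO_I_Un: "K \<in> FO_I C \<Longrightarrow> L \<in> FO_I C \<Longrightarrow> K \<union> L \<in> FO_I C"
  unfolding FO_I_def by clarify (rule exI[of _ "FOr _ _"], auto)

lemma FO_I_Compl: "L \<in> FO_I C \<Longrightarrow> - L \<in> FO_I C"
  unfolding FO_I_def by clarify (rule exI[of _ "FNeg _"], auto)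

lemma FO_I_conc:
  assumes "UNIV \<in> C" "K \<in> FO_I C" "L \<in> FO_I C"
  shows "conc K L \<in> FO_I C"
proof -
  obtain \<phi> \<psi> where \<phi>: "free_vars \<phi> = {}" "preds \<phi> \<subseteq> C" "K = {w. sat w (\<lambda>_. 0) \<phi>}"
    and \<psi>: "free_vars \<psi> = {}" "preds \<psi> \<subseteq> C" "L = {w. sat w (\<lambda>_. 0) \<psi>}"
    using assms(2,3) unfolding FO_I_def by blast
  obtain x where "\<forall>v \<in> bvars \<phi> \<union> bvars \<psi>. v < x"
    using finite_nat_set_iff_bounded finite_bvars finite_Un by metis
  then have "conc K L = {w. sat w (\<lambda>_. 0) (conc_formula x \<phi> \<psi>)}"
    using \<phi> \<psi> sat_conc_formula by blast
  moreover have "preds (conc_formula x \<phi> \<psi>) \<subseteq> C"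
    using preds_conc_formula[of x \<phi> \<psi>] \<phi>(2) \<psi>(2) assms(1) by blast
  ultimately show ?thesis
    using FO_I_intro[OF free_vars_conc_formula[OF \<phi>(1) \<psi>(1)]] by simp
qed

lemma SF_subset_FO_I:
  assumes "UNIV \<in> C"
  shows "SF C \<subseteq> FO_I C"
proof
  fix L assume "L \<in> SF C"
  then show "L \<in> FO_I C"
    by induction (auto intro: FO_I_base FO_I_singleton FO_I_Un FO_I_Compl FO_I_conc[OF assms])
qed

theorem theorem6p5:
  fixes C :: "('a::finite) list set set"
  assumes "prevariety C"
  shows "SF C = FO_I C"
proof
  show "SF C \<subseteq> FO_I C"
    using assms by (intro SF_subset_FO_I) (simp add: prevariety_def)
  show "FO_I C \<subseteq> SF C"
    using assms by (rule FO_I_subset_SF)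
qed

end
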